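(* Let $a,b$ be unitary matrices of the same size. If $b^{-1}a^2b=a^3$, then $ab^{-1}ab=b^{-1}aba$. *)

theory Defs
  imports "HOL-Analysis.Analysis"
begin

definition conj_transpose :: "complex^'n^'m \<Rightarrow> complex^'m^'n" where
  "conj_transpose A = (\<chi> i j. cnj (A $ j $ i))"

definition unitary :: "complex^'n^'n \<Rightarrow> bool" where
  "unitary U \<longleftrightarrow> conj_transpose U ** U = mat 1 \<and> U ** conj_transpose U = mat 1"

end

theory Submission
  imports Defs "HOL-Computational_Algebra.Fundamental_Theorem_Algebra"
begin

text \<open>
  From \<open>b\<^sup>-\<^sup>1 a\<^sup>2 b = a\<^sup>3\<close>, if \<open>r\<close> is an eigenvalue of \<open>a\<close> then \<open>r\<^sup>3\<close> is an eigenvalue of \<open>a\<^sup>2\<close>,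
  so some eigenvalue \<open>s\<close> of \<open>a\<close> has \<open>s\<^sup>2 = r\<^sup>3\<close>. Since there are finitely many eigenvalues,
  iterating \<open>r \<mapsto> s\<close> must cycle, and this forces every eigenvalue to be a root of unity of
  odd order; hence they are all \<open>N\<close>-th roots of unity for one odd \<open>N\<close>. As \<open>a\<close> is unitary,
  hence diagonalisable, \<open>a\<^sup>N = 1\<close>. Then \<open>c = b\<^sup>-\<^sup>1 a b\<close> satisfies \<open>c\<^sup>N = 1\<close> and \<open>c\<^sup>2 = a\<^sup>3\<close>,
  so \<open>c = (c\<^sup>2)\<^bsup>(N+1)/2\<^esup> = a\<^bsup>3(N+1)/2\<^esup>\<close> commutes with \<open>a\<close>.

  Diagonalisability is replaced by two facts: by the fundamental theorem of algebra some
  power of \<open>X\<^sup>N - 1\<close> annihilates \<open>a\<close>, and a nilpotent normal matrix is zero.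
\<close>

lemma mat_matrix_mul: "mat c ** (A :: 'a::semiring_1^'m^'n) = (\<chi> i j. c * A$i$j)"
  by (simp add: mat_def matrix_matrix_mult_def vec_eq_iff if_distrib if_distribR
      sum.delta cong: if_cong)

lemma matrix_mul_mat: "(A :: 'a::semiring_1^'n^'m) ** mat c = (\<chi> i j. A$i$j * c)"
  by (simp add: mat_def matrix_matrix_mult_def vec_eq_iff if_distrib if_distribR
      sum.delta' cong: if_cong)

lemma mat_matrix_mul_commute: "mat c ** (A :: 'a::comm_semiring_1^'n^'n) = A ** mat c"
  by (simp add: mat_matrix_mul matrix_mul_mat mult.commute)

lemma mat_matrix_mul_left_commute:
  "mat c ** ((A :: 'a::comm_semiring_1^'n^'n) ** B) = A ** (mat c ** B)"
  by (metis mat_matrix_mul_commute matrix_mul_assoc)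

lemma mat_mult: "mat c ** mat d = (mat (c * d) :: 'a::semiring_1^'n^'n)"
  unfolding mat_matrix_mul by (simp add: mat_def vec_eq_iff)

lemma mat_add: "mat (c + d) = (mat c + mat d :: 'a::monoid_add^'n^'n)"
  by (simp add: mat_def vec_eq_iff)

lemma mat_uminus: "mat (- c) = (- mat c :: 'a::group_add^'n^'n)"
  by (simp add: mat_def vec_eq_iff)

lemma mat_scaleR: "mat (of_real r) ** (A :: 'a::real_algebra_1^'n^'n) = r *\<^sub>R A"
  by (simp add: mat_matrix_mul vec_eq_iff) (simp add: scaleR_conv_of_real)

lemma mat_matrix_vector_mult: "mat c *v (x :: 'a::semiring_1^'n) = c *s x"
  by (simp add: mat_def matrix_vector_mult_def vec_eq_iff if_distrib if_distribR
      sum.delta cong: if_cong)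

lemma matrix_add_rdistrib: "(B + C) ** A = B ** A + C ** (A :: 'a::semiring_1^'n^'m)"
  by (simp add: matrix_matrix_mult_def vec_eq_iff sum.distrib distrib_right)

lemma matrix_diff_ldistrib: "A ** (B - C) = A ** B - A ** (C :: 'a::ring_1^'n^'m)"
  by (simp add: matrix_matrix_mult_def vec_eq_iff sum_subtractf right_diff_distrib)

lemma matrix_diff_rdistrib: "(B - C) ** A = B ** A - C ** (A :: 'a::ring_1^'n^'m)"
  by (simp add: matrix_matrix_mult_def vec_eq_iff sum_subtractf left_diff_distrib)

lemma matrix_mul_sum: "(A :: 'a::semiring_1^'m^'n) ** sum f S = (\<Sum>i\<in>S. A ** f i)"
  by (induction S rule: infinite_finite_induct) (auto simp: matrix_add_ldistrib)

fun matpow :: "'a::semiring_1^'n^'n \<Rightarrow> nat \<Rightarrow> 'a^'n^'n" where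
  "matpow A 0 = mat 1"
| "matpow A (Suc k) = A ** matpow A k"

lemma matpow_add: "matpow A (m + n) = matpow A m ** matpow A n"
  by (induction m) (auto simp: matrix_mul_assoc)

lemma matpow_mult: "matpow A (m * n) = matpow (matpow A m) n"
  by (induction n) (auto simp: matpow_add mult.commute[of m])

lemma matrix_mul_matpow_commute:
  "A ** B = B ** A \<Longrightarrow> A ** matpow B k = matpow B k ** A"
  by (induction k) (simp_all, metis matrix_mul_assoc)

lemma matpow_commute: "A ** matpow A k = matpow A k ** A"
  by (rule matrix_mul_matpow_commute) (rule refl)

lemma matpow_conjugate:
  assumes "P ** P' = mat 1" and "P' ** P = mat 1"
  shows "matpow (P' ** A ** P) k = P' ** matpow A k ** P"
proof (induction k)
  case 0
  then show ?case using assms(2) by simp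
next
  case (Suc k)
  have "matpow (P' ** A ** P) (Suc k) = P' ** A ** (P ** P') ** matpow A k ** P"
    using Suc by (simp add: matrix_mul_assoc)
  then show ?case using assms(1) by (simp add: matrix_mul_assoc)
qed

subsection \<open>Polynomials evaluated at a matrix\<close>

definition poly_matrix :: "'a::comm_ring_1 poly \<Rightarrow> 'a^'n^'n \<Rightarrow> 'a^'n^'n" where
  "poly_matrix p A = (\<Sum>i\<le>degree p. mat (coeff p i) ** matpow A i)"

lemma poly_matrix_eq_sum:
  assumes "degree p \<le> n"
  shows "poly_matrix p A = (\<Sum>i\<le>n. mat (coeff p i) ** matpow A i)"
  unfolding poly_matrix_def
  by (rule sum.mono_neutral_left) (use assms in \<open>auto simp: coeff_eq_0\<close>)

lemma poly_matrix_0 [simp]: "poly_matrix 0 A = 0"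
  by (simp add: poly_matrix_def)

lemma poly_matrix_const [simp]: "poly_matrix [:c:] A = mat c"
  by (simp add: poly_matrix_def)

lemma poly_matrix_1 [simp]: "poly_matrix 1 A = mat 1"
  by (simp add: one_pCons)

lemma poly_matrix_add: "poly_matrix (p + q) A = poly_matrix p A + poly_matrix q A"
proof -
  let ?n = "max (degree p) (degree q)"
  have "poly_matrix (p + q) A = (\<Sum>i\<le>?n. mat (coeff (p + q) i) ** matpow A i)"
    by (rule poly_matrix_eq_sum) (simp add: degree_add_le)
  also have "\<dots> = (\<Sum>i\<le>?n. mat (coeff p i) ** matpow A i) + (\<Sum>i\<le>?n. mat (coeff q i) ** matpow A i)"
    by (simp add: mat_add matrix_add_rdistrib sum.distrib)
  also have "\<dots> = poly_matrix p A + poly_matrix q A"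
    using poly_matrix_eq_sum[of p ?n A] poly_matrix_eq_sum[of q ?n A] by simp
  finally show ?thesis .
qed

lemma poly_matrix_diff: "poly_matrix (p - q) A = poly_matrix p A - poly_matrix q A"
  using poly_matrix_add[of "p - q" q A] by simp

lemma poly_matrix_smult: "poly_matrix (smult c p) A = mat c ** poly_matrix p A"
proof -
  have "poly_matrix (smult c p) A = (\<Sum>i\<le>degree p. mat (coeff (smult c p) i) ** matpow A i)"
    by (rule poly_matrix_eq_sum) (rule degree_smult_le)
  then show ?thesis
    by (simp add: poly_matrix_def matrix_mul_sum matrix_mul_assoc mat_mult)
qed

lemma poly_matrix_pCons: "poly_matrix (pCons c p) A = mat c + A ** poly_matrix p A"
proof -
  have "poly_matrix (pCons c p) A
      = (\<Sum>i\<le>Suc (degree p). mat (coeff (pCons c p) i) ** matpow A i)"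
    by (rule poly_matrix_eq_sum) (simp add: degree_pCons_le)
  also have "\<dots> = mat c + (\<Sum>i\<le>degree p. mat (coeff p i) ** (A ** matpow A i))"
    by (subst sum.atMost_Suc_shift) simp
  also have "\<dots> = mat c + A ** poly_matrix p A"
    by (simp add: poly_matrix_def matrix_mul_sum mat_matrix_mul_left_commute)
  finally show ?thesis .
qed

lemma poly_matrix_linear: "poly_matrix [:- z, 1:] A = A - mat z"
  by (simp add: poly_matrix_pCons mat_uminus)

lemma poly_matrix_mult: "poly_matrix (p * q) A = poly_matrix p A ** poly_matrix q A"
proof (induction p rule: pCons_induct)
  case 0
  then show ?case by simp
next
  case (pCons c p)
  then show ?case
    by (simp add: poly_matrix_add poly_matrix_smult poly_matrix_pCons
        matrix_add_rdistrib matrix_mul_assoc)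
qed

lemma poly_matrix_power: "poly_matrix (p ^ k) A = matpow (poly_matrix p A) k"
  by (induction k) (simp_all add: poly_matrix_mult)

lemma poly_matrix_commute: "poly_matrix p A ** poly_matrix q A = poly_matrix q A ** poly_matrix p A"
  by (metis poly_matrix_mult mult.commute)

lemma poly_matrix_linear_factor:
  "poly_matrix ([:- z, 1:] * p) A = poly_matrix p A ** (A - mat z)"
  by (metis poly_matrix_mult poly_matrix_commute poly_matrix_linear)

definition eigenvalue :: "'a::field^'n^'n \<Rightarrow> 'a \<Rightarrow> bool" where
  "eigenvalue A r \<longleftrightarrow> (\<exists>x. x \<noteq> 0 \<and> A *v x = r *s x)"

lemma eigenvalue_cube: "eigenvalue A r \<Longrightarrow> eigenvalue (A ** A ** A) (r ^ 3)"
  unfolding eigenvalue_def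
  by (auto simp: matrix_vector_mul_assoc[symmetric] vector_scalar_commute power3_eq_cube
      mult.assoc)

lemma eigenvalue_intertwine:
  assumes "M ** B = B ** N" and "B' ** B = mat 1" and "eigenvalue N r"
  shows "eigenvalue M r"
proof -
  obtain x where x: "x \<noteq> 0" "N *v x = r *s x"
    using assms(3) by (auto simp: eigenvalue_def)
  have "B' *v (B *v x) = x"
    using assms(2) by (simp add: matrix_vector_mul_assoc)
  then have "B *v x \<noteq> 0"
    using x(1) by auto
  moreover have "M *v (B *v x) = r *s (B *v x)"
    by (simp add: matrix_vector_mul_assoc assms(1))
       (simp add: matrix_vector_mul_assoc[symmetric] x(2) vector_scalar_commute)
  ultimately show ?thesis
    by (auto simp: eigenvalue_def)
qed

lemma eigenvalue_square_root:
  assumes "eigenvalue (A ** A) (s ^ 2)"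
  shows "eigenvalue A s \<or> eigenvalue A (- s)"
proof -
  obtain y where y: "y \<noteq> 0" "A *v (A *v y) = s ^ 2 *s y"
    using assms by (auto simp: eigenvalue_def matrix_vector_mul_assoc)
  define z where "z = A *v y - s *s y"
  show ?thesis
  proof (cases "z = 0")
    case True
    then have "A *v y = s *s y"
      by (simp add: z_def)
    then show ?thesis
      using y(1) by (auto simp: eigenvalue_def)
  next
    case False
    have "A *v z = (- s) *s z"
      by (simp add: z_def matrix_vector_mult_diff_distrib vector_scalar_commute y(2))
         (simp add: vec_eq_iff algebra_simps power2_eq_square)
    then show ?thesis
      using False by (auto simp: eigenvalue_def)
  qed
qed

lemma left_invertible_if_not_eigenvalue:
  assumes "\<not> eigenvalue A z"
  shows "\<exists>B. B ** (A - mat z) = mat 1"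
  unfolding matrix_left_invertible_ker
  using assms by (auto simp: eigenvalue_def matrix_vector_mult_diff_rdistrib mat_matrix_vector_mult)

lemma poly_matrix_eigenvector:
  fixes A :: "'a::field^'n^'n"
  assumes "A *v x = r *s x"
  shows "poly_matrix p A *v x = poly p r *s x"
proof (induction p rule: pCons_induct)
  case 0
  then show ?case by simp
next
  case (pCons c p)
  have "poly_matrix (pCons c p) A *v x = c *s x + A *v (poly p r *s x)"
    by (simp add: poly_matrix_pCons matrix_vector_mult_add_rdistrib mat_matrix_vector_mult
        matrix_vector_mul_assoc[symmetric] pCons.IH)
  also have "\<dots> = poly (pCons c p) r *s x"
    by (simp add: vector_scalar_commute assms vec_eq_iff algebra_simps)
  finally show ?case .
qed

subsection \<open>Annihilating polynomials of complex matrices\<close>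

lemma exists_poly_matrix_eq_0: "\<exists>p. p \<noteq> 0 \<and> poly_matrix p (A :: complex^'n^'n) = 0"
proof (cases "inj_on (matpow A) {..DIM(complex^'n^'n)}")
  case True
  define D where "D = DIM(complex^'n^'n)"
  define S where "S = matpow A ` {..D}"
  have "finite S" and "card S = Suc D"
    using True by (simp_all add: S_def D_def card_image)
  then have "real_vector.dependent S"
    using dependent_biggerset[of S] by (simp add: D_def)
  then obtain u where u: "\<exists>v\<in>S. u v \<noteq> 0" "(\<Sum>v\<in>S. u v *\<^sub>R v) = 0"
    using real_vector.dependent_finite[OF \<open>finite S\<close>] by blast
  define p where "p = (\<Sum>i\<le>D. monom (complex_of_real (u (matpow A i))) i)"
  have coeff_p: "coeff p j = (if j \<le> D then complex_of_real (u (matpow A j)) else 0)" for j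
    by (simp add: p_def coeff_sum coeff_monom)
  have "poly_matrix p A = (\<Sum>i\<le>D. mat (coeff p i) ** matpow A i)"
    by (rule poly_matrix_eq_sum) (rule degree_le, simp add: coeff_p)
  also have "\<dots> = (\<Sum>v\<in>S. u v *\<^sub>R v)"
    unfolding S_def using True
    by (subst sum.reindex) (auto simp: D_def coeff_p mat_scaleR)
  finally have "poly_matrix p A = 0"
    using u(2) by simp
  moreover have "p \<noteq> 0"
    using u(1) by (auto simp: S_def poly_eq_iff coeff_p)
  ultimately show ?thesis by blast
next
  case False
  then obtain i j where ij: "i \<noteq> j" "matpow A i = matpow A j"
    unfolding inj_on_def by blast
  define p :: "complex poly" where "p = [:0, 1:] ^ i - [:0, 1:] ^ j"
  have "poly_matrix p A = 0"
    using poly_matrix_linear[of 0 A] by (simp add: p_def poly_matrix_diff poly_matrix_power ij)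
  moreover have "p \<noteq> 0"
    using ij(1) by (metis degree_linear_power p_def right_minus_eq)
  ultimately show ?thesis by blast
qed

lemma finite_eigenvalues: "finite {r. eigenvalue (A :: complex^'n^'n) r}"
proof -
  obtain p where p: "p \<noteq> 0" "poly_matrix p A = 0"
    using exists_poly_matrix_eq_0 by blast
  have "{r. eigenvalue A r} \<subseteq> {x. poly p x = 0}"
  proof
    fix r assume "r \<in> {r. eigenvalue A r}"
    then obtain x where x: "x \<noteq> 0" "A *v x = r *s x"
      by (auto simp: eigenvalue_def)
    then have "poly p r *s x = 0"
      using poly_matrix_eigenvector[OF x(2), of p] p(2) by simp
    then show "r \<in> {x. poly p x = 0}"
      using x(1) by simp
  qed
  then show ?thesis
    using poly_roots_finite[OF p(1)] finite_subset by blast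
qed

lemma poly_matrix_annihilates_by_root:
  assumes "poly q z = 0" and "poly_matrix Q A ** ((A - mat z) ** Y) = 0"
  shows "poly_matrix (Q * q) A ** Y = 0"
proof -
  obtain t where "q = [:- z, 1:] * t"
    using assms(1) by (metis dvdE poly_eq_0_iff_dvd)
  then have "poly_matrix q A = poly_matrix t A ** (A - mat z)"
    by (simp only: poly_matrix_linear_factor)
  then have "poly_matrix (Q * q) A ** Y = poly_matrix t A ** (poly_matrix Q A ** ((A - mat z) ** Y))"
    by (simp add: poly_matrix_mult matrix_mul_assoc poly_matrix_commute[of Q A t])
  then show ?thesis
    using assms(2) by simp
qed

lemma poly_matrix_annihilates_cancel:
  assumes "\<not> eigenvalue A z" and "poly_matrix Q A ** ((A - mat z) ** Y) = 0"
  shows "poly_matrix Q A ** Y = 0"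
proof -
  obtain B where B: "B ** (A - mat z) = mat 1"
    using left_invertible_if_not_eigenvalue[OF assms(1)] by blast
  have "poly_matrix Q A ** Y = B ** (A - mat z) ** poly_matrix Q A ** Y"
    by (simp add: B)
  also have "\<dots> = B ** (poly_matrix Q A ** ((A - mat z) ** Y))"
    using poly_matrix_commute[of Q A "[:- z, 1:]"]
    by (simp add: poly_matrix_linear matrix_mul_assoc)
  finally show ?thesis
    using assms(2) by simp
qed

text \<open>
  Splitting off the linear factors of \<open>p\<close> one at a time: a factor at a non-eigenvalue is
  invertible and is dropped, a factor at an eigenvalue is absorbed into one more copy of \<open>q\<close>.
\<close>

lemma poly_matrix_power_annihilates:
  fixes A :: "complex^'n^'n"
  assumes q: "\<And>r. eigenvalue A r \<Longrightarrow> poly q r = 0"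
  shows "p \<noteq> 0 \<Longrightarrow> poly_matrix p A ** Y = 0 \<Longrightarrow> \<exists>k. poly_matrix (q ^ k) A ** Y = 0"
proof (induction "degree p" arbitrary: p Y rule: less_induct)
  case less
  show ?case
  proof (cases "degree p = 0")
    case True
    then obtain c where "p = [:c:]" and "c \<noteq> 0"
      using less.prems(1) by (metis degree_0_id pCons_eq_0_iff)
    then have "mat (1 / c) ** (mat c ** Y) = 0"
      using less.prems(2) by simp
    then have "Y = 0"
      using \<open>c \<noteq> 0\<close> by (simp add: matrix_mul_assoc mat_mult)
    then show ?thesis by simp
  next
    case False
    then obtain z where "poly p z = 0"
      by (metis constant_degree fundamental_theorem_of_algebra)
    then obtain p' where p: "p = [:- z, 1:] * p'"
      by (metis dvdE poly_eq_0_iff_dvd)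
    with less.prems(1) have "p' \<noteq> 0"
      by auto
    then have "degree p' < degree p"
      unfolding p by (subst degree_mult_eq) auto
    moreover have "poly_matrix p' A ** ((A - mat z) ** Y) = 0"
      using less.prems(2) unfolding p poly_matrix_linear_factor by (simp add: matrix_mul_assoc)
    ultimately obtain k where k: "poly_matrix (q ^ k) A ** ((A - mat z) ** Y) = 0"
      using less.hyps \<open>p' \<noteq> 0\<close> by blast
    show ?thesis
    proof (cases "eigenvalue A z")
      case True
      then have "poly_matrix (q ^ k * q) A ** Y = 0"
        using poly_matrix_annihilates_by_root[OF q k] by blast
      then show ?thesis
        by (metis power_Suc2)
    next
      case False
      then show ?thesis
        using poly_matrix_annihilates_cancel k by blast
    qed
  qed
qed

subsection \<open>Normal and unitary matrices\<close>

definition cinner :: "complex^'n \<Rightarrow> complex^'n \<Rightarrow> complex" where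
  "cinner x y = (\<Sum>i\<in>UNIV. cnj (x$i) * y$i)"

lemma cinner_zero_right [simp]: "cinner x 0 = 0"
  by (simp add: cinner_def)

lemma cinner_self_eq_0_iff: "cinner x x = 0 \<longleftrightarrow> x = 0"
proof
  assume "cinner x x = 0"
  moreover have "cinner x x = complex_of_real (\<Sum>i\<in>UNIV. (cmod (x$i))\<^sup>2)"
    by (simp add: cinner_def complex_mult_cnj cmod_def mult.commute)
  ultimately have "(\<Sum>i\<in>UNIV. (cmod (x$i))\<^sup>2) = 0"
    by (metis of_real_eq_0_iff)
  then show "x = 0"
    by (simp add: sum_nonneg_eq_0_iff vec_eq_iff)
qed (simp add: cinner_def)

lemma cinner_matrix_vector_mult_left: "cinner (T *v x) y = cinner x (conj_transpose T *v y)"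
proof -
  have "cinner (T *v x) y = (\<Sum>i\<in>UNIV. \<Sum>j\<in>UNIV. cnj (T$i$j) * cnj (x$j) * y$i)"
    by (simp add: cinner_def matrix_vector_mult_def sum_distrib_right)
  also have "\<dots> = (\<Sum>j\<in>UNIV. \<Sum>i\<in>UNIV. cnj (T$i$j) * cnj (x$j) * y$i)"
    by (rule sum.swap)
  also have "\<dots> = cinner x (conj_transpose T *v y)"
    by (simp add: cinner_def matrix_vector_mult_def conj_transpose_def sum_distrib_left mult_ac)
  finally show ?thesis .
qed

lemma conj_transpose_matrix_mul:
  "conj_transpose (A ** B) = conj_transpose B ** conj_transpose A"
  by (simp add: conj_transpose_def matrix_matrix_mult_def vec_eq_iff mult.commute)

lemma conj_transpose_diff: "conj_transpose (A - B) = conj_transpose A - conj_transpose B"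
  by (simp add: conj_transpose_def vec_eq_iff)

lemma conj_transpose_conj_transpose [simp]: "conj_transpose (conj_transpose A) = A"
  by (simp add: conj_transpose_def vec_eq_iff)

lemma conj_transpose_mat: "conj_transpose (mat c) = mat (cnj c)"
  by (simp add: conj_transpose_def mat_def vec_eq_iff)

lemma conj_transpose_matpow: "conj_transpose (matpow A k) = matpow (conj_transpose A) k"
  by (induction k) (simp_all add: conj_transpose_mat conj_transpose_matrix_mul matpow_commute)

definition normal_matrix :: "complex^'n^'n \<Rightarrow> bool" where
  "normal_matrix T \<longleftrightarrow> conj_transpose T ** T = T ** conj_transpose T"

lemma normal_matrix_kernel_square:
  assumes "normal_matrix T" and "T *v (T *v w) = 0"
  shows "T *v w = 0"
proof -
  define u where "u = T *v w"
  define T' where "T' = conj_transpose T"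
  have "cinner (T' *v u) (T' *v u) = cinner u ((T ** T') *v u)"
    using cinner_matrix_vector_mult_left[of T' u "T' *v u"]
    by (simp add: T'_def matrix_vector_mul_assoc)
  also have "\<dots> = cinner u (T' *v (T *v u))"
    using assms(1) by (simp add: normal_matrix_def T'_def matrix_vector_mul_assoc)
  also have "\<dots> = 0"
    using assms(2) by (simp add: u_def)
  finally have "T' *v u = 0"
    by (simp add: cinner_self_eq_0_iff)
  then have "cinner u u = 0"
    using cinner_matrix_vector_mult_left[of T w u] by (simp add: u_def T'_def)
  then show ?thesis
    by (simp add: cinner_self_eq_0_iff u_def)
qed

lemma normal_matrix_nilpotent_eq_0:
  assumes "normal_matrix T"
  shows "matpow T (Suc k) = 0 \<Longrightarrow> T = 0"
proof (induction k)
  case 0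
  then show ?case by simp
next
  case (Suc k)
  have "matpow T (Suc k) *v v = 0" for v
  proof -
    have "T *v (T *v (matpow T k *v v)) = matpow T (Suc (Suc k)) *v v"
      by (simp add: matrix_vector_mul_assoc)
    then have "T *v (matpow T k *v v) = 0"
      using Suc.prems normal_matrix_kernel_square[OF assms] by simp
    then show ?thesis
      by (simp add: matrix_vector_mul_assoc)
  qed
  then have "matpow T (Suc k) = 0"
    by (simp add: matrix_eq)
  then show ?case
    by (rule Suc.IH)
qed

lemma unitary_invertible: "unitary A \<Longrightarrow> invertible A"
  unfolding unitary_def invertible_def by blast

lemma unitary_matpow:
  assumes "unitary A"
  shows "unitary (matpow A k)"
proof -
  have A: "conj_transpose A ** A = mat 1" "A ** conj_transpose A = mat 1"
    using assms by (auto simp: unitary_def)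
  have "matpow (conj_transpose A) k ** matpow A k = mat 1
      \<and> matpow A k ** matpow (conj_transpose A) k = mat 1"
  proof (induction k)
    case 0
    then show ?case by simp
  next
    case (Suc k)
    have "matpow (conj_transpose A) (Suc k) ** matpow A (Suc k)
        = conj_transpose A ** (matpow (conj_transpose A) k ** matpow A k) ** A"
      by (simp add: matpow_commute[of A] matrix_mul_assoc)
    moreover have "matpow A (Suc k) ** matpow (conj_transpose A) (Suc k)
        = A ** (matpow A k ** matpow (conj_transpose A) k) ** conj_transpose A"
      by (simp add: matpow_commute[of "conj_transpose A"] matrix_mul_assoc)
    ultimately show ?case
      using Suc.IH A by simp
  qed
  then show ?thesis
    by (simp add: unitary_def conj_transpose_matpow)
qed

lemma normal_matrix_unitary_minus_id: "unitary W \<Longrightarrow> normal_matrix (W - mat 1)"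
  by (simp add: normal_matrix_def unitary_def conj_transpose_diff conj_transpose_mat
      matrix_diff_rdistrib matrix_diff_ldistrib)

lemma unitary_unipotent_eq_id:
  assumes "unitary W" and "matpow (W - mat 1) k = 0"
  shows "W = mat 1"
proof (cases k)
  case 0
  then show ?thesis
    using assms(2) by (metis matpow.simps(1) matrix_mul_rid times0_right)
next
  case (Suc m)
  then have "W - mat 1 = 0"
    using normal_matrix_nilpotent_eq_0[OF normal_matrix_unitary_minus_id[OF assms(1)]] assms(2)
    by simp
  then show ?thesis by simp
qed

lemma unitary_eigenvalue_nonzero:
  assumes "unitary A" and "eigenvalue A r"
  shows "r \<noteq> 0"
proof
  assume "r = 0"
  with assms(2) obtain x where "x \<noteq> 0" "A *v x = 0"
    by (auto simp: eigenvalue_def)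
  moreover have "conj_transpose A *v (A *v x) = x"
    using assms(1) by (simp add: unitary_def matrix_vector_mul_assoc)
  ultimately show False by simp
qed

lemma unitary_matpow_eq_id:
  assumes "unitary A" and "\<And>r. eigenvalue A r \<Longrightarrow> r ^ N = 1"
  shows "matpow A N = mat 1"
proof -
  define q :: "complex poly" where "q = [:0, 1:] ^ N - 1"
  have "poly q r = 0" if "eigenvalue A r" for r
    using assms(2)[OF that] by (simp add: q_def)
  moreover obtain p where "p \<noteq> 0" "poly_matrix p A = 0"
    using exists_poly_matrix_eq_0 by blast
  ultimately obtain k where "poly_matrix (q ^ k) A ** mat 1 = 0"
    using poly_matrix_power_annihilates[of A q p "mat 1"] by auto
  then have "matpow (matpow A N - mat 1) k = 0"
    using poly_matrix_linear[of 0 A]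
    by (simp add: poly_matrix_power q_def poly_matrix_diff)
  then show ?thesis
    using unitary_unipotent_eq_id unitary_matpow[OF assms(1)] by blast
qed

subsection \<open>Roots of unity from the relation \<open>s\<^sup>2 = r\<^sup>3\<close>\<close>

lemma square_cube_orbit_power:
  fixes l :: "nat \<Rightarrow> 'a::comm_monoid_mult"
  assumes step: "\<And>k. l (Suc k) ^ 2 = l k ^ 3"
  shows "l (i + k) ^ (2 ^ k) = l i ^ (3 ^ k)"
proof (induction k)
  case 0
  then show ?case by simp
next
  case (Suc k)
  have "l (i + Suc k) ^ (2 ^ Suc k) = (l (Suc (i + k)) ^ 2) ^ (2 ^ k)"
    by (simp add: power_mult[symmetric] mult.commute)
  also have "\<dots> = (l (i + k) ^ (2 ^ k)) ^ 3"
    by (simp add: step power_mult[symmetric] mult.commute)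
  also have "\<dots> = l i ^ (3 ^ Suc k)"
    by (simp add: Suc.IH power_mult[symmetric] mult.commute)
  finally show ?case .
qed

lemma odd_root_of_unity_if_orbit_repeats:
  fixes l :: "nat \<Rightarrow> 'a::idom"
  assumes step: "\<And>k. l (Suc k) ^ 2 = l k ^ 3"
    and "i < j" and "l i = l j" and "l i \<noteq> 0"
  shows "\<exists>m. odd m \<and> l 0 ^ m = 1"
proof -
  define d where "d = j - i"
  define e :: nat where "e = 3 ^ d - 2 ^ d"
  have "(2::nat) ^ d \<le> 3 ^ d"
    by (simp add: power_mono)
  then have "l i ^ (3 ^ d) = l i ^ (2 ^ d) * l i ^ e"
    by (simp add: e_def power_add[symmetric])
  moreover have "l i ^ (2 ^ d) = l i ^ (3 ^ d)"
    using square_cube_orbit_power[of l, OF step, of i d] assms(2,3) by (simp add: d_def)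
  ultimately have "l i ^ e = 1"
    using assms(4) by simp
  have "odd e"
  proof -
    have "(3::nat) ^ d = 2 ^ d + e"
      using \<open>2 ^ d \<le> 3 ^ d\<close> by (simp add: e_def)
    moreover have "odd ((3::nat) ^ d)" and "even ((2::nat) ^ d)"
      using assms(2) by (simp_all add: d_def)
    ultimately show ?thesis
      by presburger
  qed
  have "l 0 ^ (3 ^ i * e) = (l i ^ (2 ^ i)) ^ e"
    using square_cube_orbit_power[of l, OF step, of 0 i] by (simp add: power_mult)
  also have "\<dots> = (l i ^ e) ^ (2 ^ i)"
    by (simp add: power_mult[symmetric] mult.commute)
  finally show ?thesis
    using \<open>l i ^ e = 1\<close> \<open>odd e\<close> by (intro exI[of _ "3 ^ i * e"]) simp
qed

lemma odd_root_of_unity_if_closed_under_square_root_of_cube: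
  fixes S :: "'a::idom set"
  assumes "finite S" and "0 \<notin> S"
    and closed: "\<And>r. r \<in> S \<Longrightarrow> \<exists>s\<in>S. s ^ 2 = r ^ 3"
    and "r \<in> S"
  shows "\<exists>m. odd m \<and> r ^ m = 1"
proof -
  obtain f where f: "\<And>x. x \<in> S \<Longrightarrow> f x \<in> S \<and> f x ^ 2 = x ^ 3"
    using closed by metis
  define l where "l k = (f ^^ k) r" for k
  have l_in_S: "l k \<in> S" for k
    by (induction k) (simp_all add: l_def \<open>r \<in> S\<close> f)
  have "finite (range l)"
    using l_in_S \<open>finite S\<close> by (meson finite_subset image_subsetI)
  then have "\<not> inj l"
    using finite_imageD by blast
  then obtain i j where "i < j" "l i = l j"
    unfolding inj_def by (metis linorder_neqE_nat)
  moreover have "l (Suc k) ^ 2 = l k ^ 3" for k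
    using f[OF l_in_S[of k]] by (simp add: l_def)
  moreover have "l i \<noteq> 0"
    using l_in_S \<open>0 \<notin> S\<close> by metis
  ultimately show ?thesis
    using odd_root_of_unity_if_orbit_repeats[of l i j] by (simp add: l_def)
qed

lemma common_odd_exponent:
  fixes S :: "'a::monoid_mult set"
  assumes "finite S" and "\<And>r. r \<in> S \<Longrightarrow> \<exists>m. odd m \<and> r ^ m = 1"
  shows "\<exists>N. odd N \<and> (\<forall>r\<in>S. r ^ N = 1)"
proof -
  obtain m where m: "\<And>r. r \<in> S \<Longrightarrow> odd (m r) \<and> r ^ m r = 1"
    using assms(2) by metis
  have "odd (\<Prod>r\<in>S. m r)"
    using assms(1) m by (induction S rule: finite_induct) auto
  moreover have "r ^ (\<Prod>r\<in>S. m r) = 1" if r: "r \<in> S" for r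
  proof -
    obtain t where "(\<Prod>r\<in>S. m r) = m r * t"
      using dvd_prodI[OF assms(1) r, of m] by (auto elim: dvdE)
    then show ?thesis
      using m[OF r] by (simp add: power_mult)
  qed
  ultimately show ?thesis by blast
qed

lemma matrix_inv_inverse:
  assumes "invertible A"
  shows "A ** matrix_inv A = mat 1" and "matrix_inv A ** A = mat 1"
proof -
  have "A ** matrix_inv A = mat 1 \<and> matrix_inv A ** A = mat 1"
    unfolding matrix_inv_def by (rule someI_ex) (use assms in \<open>simp add: invertible_def\<close>)
  then show "A ** matrix_inv A = mat 1" and "matrix_inv A ** A = mat 1"
    by auto
qed

lemma unitary_odd_order_if_square_conjugate_to_cube:
  fixes A B B' :: "complex^'n^'n"
  assumes "unitary A" and "B ** B' = mat 1" and "B' ** B = mat 1"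
    and "B' ** (A ** A) ** B = A ** A ** A"
  shows "\<exists>N. odd N \<and> matpow A N = mat 1"
proof -
  define S where "S = {r. eigenvalue A r}"
  have intertwine: "(A ** A) ** B = B ** (A ** A ** A)"
    using arg_cong[OF assms(4), of "\<lambda>M. B ** M"] assms(2) by (simp add: matrix_mul_assoc)
  have "\<exists>s\<in>S. s ^ 2 = r ^ 3" if "r \<in> S" for r
  proof -
    have "eigenvalue (A ** A) (csqrt (r ^ 3) ^ 2)"
      using eigenvalue_intertwine[OF intertwine assms(3) eigenvalue_cube] that
      by (simp add: S_def)
    then show ?thesis
      using eigenvalue_square_root by (fastforce simp: S_def)
  qed
  moreover have "finite S" and "0 \<notin> S"
    using finite_eigenvalues unitary_eigenvalue_nonzero[OF assms(1)] by (auto simp: S_def)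
  ultimately obtain N where "odd N" "\<forall>r\<in>S. r ^ N = 1"
    using common_odd_exponent odd_root_of_unity_if_closed_under_square_root_of_cube by metis
  then show ?thesis
    using unitary_matpow_eq_id[OF assms(1)] by (auto simp: S_def)
qed

lemma commute_if_square_eq_cube:
  fixes A C :: "'a::semiring_1^'n^'n"
  assumes "odd N" and "matpow C N = mat 1" and "C ** C = A ** A ** A"
  shows "A ** C = C ** A"
proof -
  obtain n where "Suc N = 2 * Suc n"
    using assms(1) by (auto elim: oddE)
  have "C = matpow C (Suc N)"
    using assms(2) by simp
  also have "\<dots> = matpow (matpow C 2) (Suc n)"
    by (simp only: \<open>Suc N = 2 * Suc n\<close> matpow_mult)
  also have "\<dots> = matpow (A ** A ** A) (Suc n)"
    using assms(3) by (simp add: numeral_2_eq_2)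
  finally show ?thesis
    by (metis matrix_mul_assoc matrix_mul_matpow_commute)
qed

theorem corollary2p2:
  fixes a b :: "complex^'n^'n"
  assumes "unitary a" and "unitary b"
    and "matrix_inv b ** (a ** a) ** b = a ** a ** a"
  shows "a ** matrix_inv b ** a ** b = matrix_inv b ** a ** b ** a"
proof -
  let ?b' = "matrix_inv b"
  note b' = matrix_inv_inverse[OF unitary_invertible[OF assms(2)]]
  obtain N where "odd N" "matpow a N = mat 1"
    using unitary_odd_order_if_square_conjugate_to_cube[OF assms(1) b' assms(3)] by blast
  moreover have "matpow (?b' ** a ** b) N = mat 1"
    using \<open>matpow a N = mat 1\<close> b' by (simp add: matpow_conjugate)
  moreover have "(?b' ** a ** b) ** (?b' ** a ** b) = a ** a ** a"
    using assms(3) b'(1) by (metis matrix_mul_assoc matrix_mul_rid)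
  ultimately have "a ** (?b' ** a ** b) = (?b' ** a ** b) ** a"
    using commute_if_square_eq_cube by blast
  then show ?thesis
    by (simp add: matrix_mul_assoc)
qed

end
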